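(* Let $N\ge2$, $a\in\mathbb R$, $\sigma\in\mathbb R^N$ with $\sigma_j\ge0$ for all $j$ and $\sum_{j=1}^N\sigma_j\le(N-1)/2$. Then there exist a sequence $(f_n)\subset G^{\sigma,a}$, each with finitely many nonzero Fourier coefficients, and a function $\varphi\in C_c^\infty(\mathbb R)$ such that: (i) $\sup_n\|f_n\|_{G^{\sigma,a}}<\infty$; (ii) $\sum_{k\in\dot{\mathbb Z}^N}\hat f_n(k)\varphi(\alpha\cdot k)\to\infty$ as $n\to\infty$. The sum in (ii) is the pairing $\langle\mathcal F_x[f_n],\varphi\rangle$, where $\mathcal F_x[f_n]=\sum_k\hat f_n(k)\delta_{\alpha\cdot k}$. In particular, the series defining elements of $G^{\sigma,a}$ need not converge in $\mathcal S'(\mathbb R)$.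
   Context: Standing setting: fix $N$ and $\alpha\in\mathbb R^N$ with $\alpha\cdot k\neq0$ for all $k\in\dot{\mathbb Z}^N:=\mathbb Z^N\setminus\{0\}$. Write $\langle x\rangle=(1+|x|^2)^{1/2}$. $G^{\sigma,a}$ is the space of series $f=\sum_{k\in\dot{\mathbb Z}^N}\hat f(k)e^{i(\alpha\cdot k)x}$ with $$\|f\|_{G^{\sigma,a}}=\Big(\sum_k|\alpha\cdot k|^{2a}\prod_j\langle k_j\rangle^{2\sigma_j}|\hat f(k)|^2\Big)^{1/2}<\infty.$$ *)

theory Defs
  imports "HOL-Analysis.Analysis"
begin

text \<open>Frequency vectors k in Z^N are rendered as int^'n, with N = CARD('n).
  The frequency of the mode k is alpha . k.\<close>

definition freq :: "real^'n \<Rightarrow> int^'n \<Rightarrow> real" where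
  "freq \<alpha> k = (\<Sum>j\<in>UNIV. \<alpha>$j * real_of_int (k$j))"

definition jbr :: "real \<Rightarrow> real" where
  "jbr x = sqrt (1 + x^2)"

definition G_weight :: "real^'n \<Rightarrow> real^'n \<Rightarrow> real \<Rightarrow> int^'n \<Rightarrow> real" where
  "G_weight \<alpha> \<sigma> a k =
     \<bar>freq \<alpha> k\<bar> powr (2*a) * (\<Prod>j\<in>UNIV. jbr (real_of_int (k$j)) powr (2 * \<sigma>$j))"

text \<open>A function f in G^{sigma,a} is identified with its coefficient family
  fhat on the nonzero frequency vectors (the value at 0 is irrelevant).\<close>
definition in_G :: "real^'n \<Rightarrow> real^'n \<Rightarrow> real \<Rightarrow> (int^'n \<Rightarrow> complex) \<Rightarrow> bool" where
  "in_G \<alpha> \<sigma> a fhat \<longleftrightarrow>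
     (\<lambda>k. G_weight \<alpha> \<sigma> a k * (cmod (fhat k))^2) summable_on {k. k \<noteq> 0}"

definition G_norm :: "real^'n \<Rightarrow> real^'n \<Rightarrow> real \<Rightarrow> (int^'n \<Rightarrow> complex) \<Rightarrow> real" where
  "G_norm \<alpha> \<sigma> a fhat =
     sqrt (infsum (\<lambda>k. G_weight \<alpha> \<sigma> a k * (cmod (fhat k))^2) {k. k \<noteq> 0})"

definition finite_support :: "(int^'n \<Rightarrow> complex) \<Rightarrow> bool" where
  "finite_support fhat \<longleftrightarrow> finite {k. k \<noteq> 0 \<and> fhat k \<noteq> 0}"

definition pairing :: "real^'n \<Rightarrow> (int^'n \<Rightarrow> complex) \<Rightarrow> (real \<Rightarrow> real) \<Rightarrow> complex" where
  "pairing \<alpha> fhat \<phi> = (\<Sum>k\<in>{k. k \<noteq> 0 \<and> fhat k \<noteq> 0}. fhat k * complex_of_real (\<phi> (freq \<alpha> k)))"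

definition smooth :: "(real \<Rightarrow> real) \<Rightarrow> bool" where
  "smooth \<phi> \<longleftrightarrow> (\<forall>m x. ((deriv ^^ m) \<phi>) differentiable (at x))"

definition Cc_infty :: "(real \<Rightarrow> real) \<Rightarrow> bool" where
  "Cc_infty \<phi> \<longleftrightarrow> smooth \<phi> \<and> compact (closure {x. \<phi> x \<noteq> 0})"

end

theory Submission
  imports Defs "HOL-Computational_Algebra.Polynomial" "HOL-Real_Asymp.Real_Asymp"
begin

(* For a finite set U of nonzero frequencies with
   weights w = G_weight, the coefficients f(k) = 1 / (sqrt W * w k) on U, where
   W = sum_{k in U} 1 / w k, have G-norm at most 1, while for a test function phi
   with phi >= c on the frequencies alpha.k of U the pairing is at least c * sqrt W.
   It therefore suffices to find finite sets U_M on which alpha.k stays in a fixed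
   compact interval [1, 1 + |alpha_i0|] and W(U_M) -> infinity. *)

section \<open>A smooth bump function with compact support\<close>

text \<open>The function \<open>exp(-1/h)\<close> vanishes faster than any power of \<open>h\<close> as \<open>h \<rightarrow> 0+\<close>;
  this makes the bump flat at the end points of its support.\<close>

lemma exp_neg_inverse_over_power_tendsto_0:
  assumes h: "filterlim h (at_right 0) F"
  shows "((\<lambda>y. exp (-1 / h y) / h y ^ m) \<longlongrightarrow> (0::real)) F"
proof -
  have lim: "((\<lambda>t::real. (inverse t) ^ m / exp (inverse t)) \<longlongrightarrow> 0) (at_right 0)"
    using filterlim_compose[OF tendsto_power_div_exp_0 filterlim_inverse_at_top_right] by simp
  have eq: "inverse x ^ m / exp (inverse x) = exp (-1 / x) / x ^ m" for x :: real
  proof -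
    have "exp (-1 / x) = inverse (exp (inverse x))"
      using exp_minus[of "inverse x"] by (simp add: divide_inverse)
    then show ?thesis by (simp add: divide_inverse power_inverse mult.commute)
  qed
  have "((\<lambda>t::real. exp (-1 / t) / t ^ m) \<longlongrightarrow> 0) (at_right 0)"
    using lim unfolding eq .
  from filterlim_compose[OF this h] show ?thesis .
qed

definition bump :: "real \<Rightarrow> real poly \<Rightarrow> nat \<Rightarrow> real \<Rightarrow> real" where
  "bump L p n x =
     (if 0 < x \<and> x < L then poly p x * exp (-1 / (x * (L - x))) / (x * (L - x)) ^ n else 0)"

text \<open>The polynomial produced by one differentiation of \<open>bump L p n\<close>; with
  \<open>D = x(L-x)\<close> and \<open>D' = L - 2x\<close> it is \<open>p' D\<^sup>2 + p D' - n p D' D\<close>.\<close>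

definition bump_deriv_poly :: "real \<Rightarrow> real poly \<Rightarrow> nat \<Rightarrow> real poly" where
  "bump_deriv_poly L p n =
     pderiv p * [:0, L, -1:]^2 + p * [:L, -2:] - smult (real n) (p * [:L, -2:] * [:0, L, -1:])"

lemma poly_bump_deriv_poly:
  "poly (bump_deriv_poly L p n) x =
     poly (pderiv p) x * (x*(L-x))^2 + poly p x * (L - 2*x) - real n * poly p x * (L-2*x) * (x*(L-x))"
  by (simp add: bump_deriv_poly_def algebra_simps)

text \<open>The field identity behind the quotient rule for \<open>P E / D\<^sup>n\<close> with
  \<open>E' = E c / D\<^sup>2\<close>, \<open>D' = c\<close>.\<close>

lemma quotient_rule_normal_form:
  fixes D E P Q c :: real
  assumes "D > 0"
  shows "((Q * E + E * (c / D^2) * P) * D ^ n - P * E * (real n * (c * D ^ (n - Suc 0)))) / (D ^ n * D ^ n)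
         = (Q * D^2 + P * c - real n * P * c * D) * E / D ^ (n + 2)"
proof (cases n)
  case 0 then show ?thesis using assms by (simp add: field_simps power2_eq_square)
next
  case (Suc m) then show ?thesis using assms by (simp add: field_simps power2_eq_square)
qed

lemma bump_formula_has_deriv:
  assumes "0 < x" "x < L"
  shows "((\<lambda>y. poly p y * exp (-1 / (y * (L - y))) / (y * (L - y)) ^ n) has_real_derivative
           bump L (bump_deriv_poly L p n) (n+2) x) (at x)"
proof -
  have D: "x * (L - x) > 0" using assms by simp
  have dD: "((\<lambda>y. y*(L-y)) has_real_derivative L - 2*x) (at x)"
    by (auto intro!: derivative_eq_intros simp: algebra_simps)
  have dpow: "((\<lambda>y. (y*(L-y))^n) has_real_derivative real n * ((L - 2*x) * (x*(L-x))^(n - Suc 0))) (at x)"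
    using DERIV_power[OF dD, of n] by simp
  have dexp: "((\<lambda>y. exp (-1/(y*(L-y)))) has_real_derivative
                exp (-1/(x*(L-x))) * ((L-2*x)/(x*(L-x))^2)) (at x)"
  proof -
    have "((\<lambda>y. -1/(y*(L-y))) has_real_derivative (0*(x*(L-x)) - (-1)*(L-2*x))/((x*(L-x))*(x*(L-x)))) (at x)"
      by (rule DERIV_divide[OF DERIV_const dD]) (use D assms in simp)
    then have "((\<lambda>y. -1/(y*(L-y))) has_real_derivative (L-2*x)/(x*(L-x))^2) (at x)"
      by (simp add: power2_eq_square)
    then show ?thesis by (rule DERIV_fun_exp)
  qed
  have "((\<lambda>y. poly p y * exp (-1 / (y * (L - y))) / (y * (L - y)) ^ n) has_real_derivative
      ((poly (pderiv p) x * exp (-1/(x*(L-x))) + exp (-1/(x*(L-x))) * ((L-2*x)/(x*(L-x))^2) * poly p x) * (x*(L-x))^n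
        - poly p x * exp (-1/(x*(L-x))) * (real n * ((L - 2*x) * (x*(L-x))^(n - Suc 0))))
       / ((x*(L-x))^n * (x*(L-x))^n)) (at x)"
    by (rule DERIV_divide[OF DERIV_mult[OF poly_DERIV dexp] dpow]) (use D assms in simp)
  then have "((\<lambda>y. poly p y * exp (-1 / (y * (L - y))) / (y * (L - y)) ^ n) has_real_derivative
      (poly (pderiv p) x * (x*(L-x))^2 + poly p x * (L - 2*x) - real n * poly p x * (L-2*x) * (x*(L-x)))
        * exp (-1 / (x * (L - x))) / (x * (L - x)) ^ (n+2)) (at x)"
    by (rule DERIV_cong) (rule quotient_rule_normal_form[OF D])
  then show ?thesis using assms by (simp add: bump_def poly_bump_deriv_poly)
qed

text \<open>At the end points \<open>0\<close> and \<open>L\<close> the difference quotients tend to \<open>0\<close>, because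
  \<open>x(L-x) \<rightarrow> 0+\<close> there and the exponential factor beats every power.\<close>

lemma xLx_at_right_0: "L > 0 \<Longrightarrow> filterlim (\<lambda>y. y * (L - y)) (at_right 0) (at_right (0::real))"
  unfolding filterlim_at
proof
  assume L: "L > 0"
  show "\<forall>\<^sub>F y in at_right 0. y * (L - y) \<in> {0<..} \<and> y * (L - y) \<noteq> 0"
    by (rule eventually_mono[OF eventually_at_right_real[OF L]]) auto
  have "((\<lambda>y. y * (L - y)) \<longlongrightarrow> 0 * (L - 0)) (at_right (0::real))"
    by (intro tendsto_intros)
  then show "((\<lambda>y. y * (L - y)) \<longlongrightarrow> 0) (at_right (0::real))" by simp
qed

lemma xLx_at_left_L: "L > 0 \<Longrightarrow> filterlim (\<lambda>y. y * (L - y)) (at_right 0) (at_left (L::real))"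
  unfolding filterlim_at
proof
  assume L: "L > 0"
  show "\<forall>\<^sub>F y in at_left L. y * (L - y) \<in> {0<..} \<and> y * (L - y) \<noteq> 0"
    by (rule eventually_mono[OF eventually_at_left_real[OF L]]) auto
  have "((\<lambda>y. y * (L - y)) \<longlongrightarrow> L * (L - L)) (at_left L)"
    by (intro tendsto_intros)
  then show "((\<lambda>y. y * (L - y)) \<longlongrightarrow> 0) (at_left L)" by simp
qed

lemma bump_has_deriv_0:
  assumes L: "L > 0"
  shows "(bump L p n has_real_derivative 0) (at 0)"
proof -
  have "((\<lambda>y. (bump L p n y - bump L p n 0) / (y - 0)) \<longlongrightarrow> 0) (at 0)"
  proof (rule filterlim_split_at)
    show "((\<lambda>y. (bump L p n y - bump L p n 0) / (y - 0)) \<longlongrightarrow> 0) (at_left 0)"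
      by (rule tendsto_eventually, rule eventually_mono[OF eventually_at_left_real[of "-1" 0]])
         (auto simp: bump_def)
    have "((\<lambda>y. poly p y * (exp (-1 / (y * (L - y))) / (y * (L - y)) ^ (n+1)) * (L - y))
           \<longlongrightarrow> poly p 0 * 0 * (L - 0)) (at_right 0)"
      by (intro tendsto_intros exp_neg_inverse_over_power_tendsto_0[OF xLx_at_right_0[OF L]])
    then have "((\<lambda>y. poly p y * (exp (-1 / (y * (L - y))) / (y * (L - y)) ^ (n+1)) * (L - y))
           \<longlongrightarrow> 0) (at_right 0)" by simp
    then show "((\<lambda>y. (bump L p n y - bump L p n 0) / (y - 0)) \<longlongrightarrow> 0) (at_right 0)"
    proof (rule Lim_transform_eventually)
      show "\<forall>\<^sub>F y in at_right 0. poly p y * (exp (-1 / (y * (L - y))) / (y * (L - y)) ^ (n+1)) * (L - y)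
              = (bump L p n y - bump L p n 0) / (y - 0)"
        by (rule eventually_mono[OF eventually_at_right_real[OF L]]) (auto simp: bump_def field_simps)
    qed
  qed
  then show ?thesis by (simp add: has_field_derivative_iff)
qed

lemma bump_has_deriv_L:
  assumes L: "L > 0"
  shows "(bump L p n has_real_derivative 0) (at L)"
proof -
  have "((\<lambda>y. (bump L p n y - bump L p n L) / (y - L)) \<longlongrightarrow> 0) (at L)"
  proof (rule filterlim_split_at)
    show "((\<lambda>y. (bump L p n y - bump L p n L) / (y - L)) \<longlongrightarrow> 0) (at_right L)"
      by (rule tendsto_eventually, rule eventually_mono[OF eventually_at_right_real[of L "L+1"]])
         (auto simp: bump_def)
    have "((\<lambda>y. - poly p y * (exp (-1 / (y * (L - y))) / (y * (L - y)) ^ (n+1)) * y)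
           \<longlongrightarrow> - poly p L * 0 * L) (at_left L)"
      by (intro tendsto_intros exp_neg_inverse_over_power_tendsto_0[OF xLx_at_left_L[OF L]])
    then have "((\<lambda>y. - poly p y * (exp (-1 / (y * (L - y))) / (y * (L - y)) ^ (n+1)) * y)
           \<longlongrightarrow> 0) (at_left L)" by simp
    then show "((\<lambda>y. (bump L p n y - bump L p n L) / (y - L)) \<longlongrightarrow> 0) (at_left L)"
    proof (rule Lim_transform_eventually)
      show "\<forall>\<^sub>F y in at_left L. - poly p y * (exp (-1 / (y * (L - y))) / (y * (L - y)) ^ (n+1)) * y
              = (bump L p n y - bump L p n L) / (y - L)"
        by (rule eventually_mono[OF eventually_at_left_real[OF L]]) (auto simp: bump_def field_simps)
    qed
  qed
  then show ?thesis by (simp add: has_field_derivative_iff)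
qed

lemma bump_has_deriv:
  assumes L: "L > 0"
  shows "(bump L p n has_real_derivative bump L (bump_deriv_poly L p n) (n+2) x) (at x)"
proof -
  have zero_deriv: "(bump L p n has_real_derivative 0) (at x)" if "x \<in> S" "open S"
    and "\<And>y. y \<in> S \<Longrightarrow> bump L p n y = 0" for S
    by (rule has_field_derivative_transform_within_open[OF DERIV_const that(2,1)]) (use that in auto)
  consider "x < 0" | "x = 0" | "0 < x \<and> x < L" | "x = L" | "x > L" by linarith
  then show ?thesis
  proof cases
    case 1
    with zero_deriv[of "{..<0}"] show ?thesis by (simp add: bump_def)
  next
    case 2
    with bump_has_deriv_0[OF L] show ?thesis by (simp add: bump_def)
  next
    case 3
    from 3 have "((\<lambda>y. poly p y * exp (-1 / (y * (L - y))) / (y * (L - y)) ^ n) has_real_derivative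
                   bump L (bump_deriv_poly L p n) (n+2) x) (at x)"
      by (intro bump_formula_has_deriv) auto
    then show ?thesis
      by (rule has_field_derivative_transform_within_open[of _ _ _ "{0<..<L}"])
         (use 3 in \<open>auto simp: bump_def\<close>)
  next
    case 4
    with bump_has_deriv_L[OF L] show ?thesis by (simp add: bump_def)
  next
    case 5
    with zero_deriv[of "{L<..}"] show ?thesis by (simp add: bump_def)
  qed
qed

lemma bump_Cc_infty:
  assumes L: "L > 0"
  shows "Cc_infty (bump L p n)"
proof -
  have "\<exists>q k. (deriv ^^ m) (bump L p n) = bump L q k" for m
  proof (induction m)
    case 0 then show ?case by auto
  next
    case (Suc m)
    then obtain q k where "(deriv ^^ m) (bump L p n) = bump L q k" by blast
    moreover have "deriv (bump L q k) = bump L (bump_deriv_poly L q k) (k+2)"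
      by (rule ext, rule DERIV_imp_deriv, rule bump_has_deriv[OF L])
    ultimately show ?case by auto
  qed
  then have "smooth (bump L p n)"
    unfolding smooth_def
    by (metis bump_has_deriv[OF L] differentiable_def has_field_derivative_def)
  moreover have "compact (closure {x. bump L p n x \<noteq> 0})"
    unfolding compact_closure
    by (rule bounded_subset[OF bounded_closed_interval[of 0 L]]) (auto simp: bump_def split: if_splits)
  ultimately show ?thesis by (simp add: Cc_infty_def)
qed

lemma bump_lower_bound:
  assumes "1 \<le> x" "x \<le> L - 1"
  shows "exp (-1) \<le> bump L 1 0 x"
proof -
  have "1 \<le> x * (L - x)" using mult_mono[of 1 x 1 "L - x"] assms by simp
  then have "-1 \<le> -1 / (x * (L - x))" by (simp add: field_simps)
  then show ?thesis using assms by (simp add: bump_def)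
qed

section \<open>Dyadic blocks of frequencies in a fixed band\<close>

definition dyadic_box :: "'n::finite \<Rightarrow> nat \<Rightarrow> ('n \<Rightarrow> int) set" where
  "dyadic_box i0 m = PiE (UNIV - {i0}) (\<lambda>_. {2^m ..< 2^(m+1)})"

definition partial_freq :: "real^('n::finite) \<Rightarrow> 'n \<Rightarrow> ('n \<Rightarrow> int) \<Rightarrow> real" where
  "partial_freq \<alpha> i0 g = (\<Sum>j\<in>UNIV-{i0}. \<alpha>$j * of_int (g j))"

text \<open>The least integer \<open>c\<close> (up to the sign of \<open>\<alpha>\<^sub>i\<^sub>0\<close>) with
  \<open>\<alpha>\<^sub>i\<^sub>0 c + partial_freq \<ge> 1\<close>; it puts the frequency into \<open>[1, 1 + |\<alpha>\<^sub>i\<^sub>0|]\<close>.\<close>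

definition balancing_coord :: "real^'n \<Rightarrow> 'n \<Rightarrow> ('n \<Rightarrow> int) \<Rightarrow> int" where
  "balancing_coord \<alpha> i0 g =
     (if \<alpha>$i0 > 0 then \<lceil>(1 - partial_freq \<alpha> i0 g) / \<bar>\<alpha>$i0\<bar>\<rceil>
      else - \<lceil>(1 - partial_freq \<alpha> i0 g) / \<bar>\<alpha>$i0\<bar>\<rceil>)"

definition band_lift :: "real^'n \<Rightarrow> 'n \<Rightarrow> ('n \<Rightarrow> int) \<Rightarrow> int^'n" where
  "band_lift \<alpha> i0 g = (\<chi> j. if j = i0 then balancing_coord \<alpha> i0 g else g j)"

definition dyadic_block :: "real^'n \<Rightarrow> 'n \<Rightarrow> nat \<Rightarrow> (int^'n) set" where
  "dyadic_block \<alpha> i0 m = band_lift \<alpha> i0 ` dyadic_box i0 m"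

lemma freq_band_lift:
  "freq \<alpha> (band_lift \<alpha> i0 g) = \<alpha>$i0 * of_int (balancing_coord \<alpha> i0 g) + partial_freq \<alpha> i0 g"
proof -
  have "freq \<alpha> (band_lift \<alpha> i0 g) = \<alpha>$i0 * of_int (band_lift \<alpha> i0 g $ i0)
          + (\<Sum>j\<in>UNIV-{i0}. \<alpha>$j * of_int (band_lift \<alpha> i0 g $ j))"
    unfolding freq_def by (rule sum.remove) auto
  also have "(\<Sum>j\<in>UNIV-{i0}. \<alpha>$j * of_int (band_lift \<alpha> i0 g $ j)) = partial_freq \<alpha> i0 g"
    unfolding partial_freq_def by (rule sum.cong) (auto simp: band_lift_def)
  finally show ?thesis by (simp add: band_lift_def)
qed

lemma freq_band_lift_range:
  assumes "\<alpha>$i0 \<noteq> 0"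
  shows "1 \<le> freq \<alpha> (band_lift \<alpha> i0 g) \<and> freq \<alpha> (band_lift \<alpha> i0 g) \<le> 1 + \<bar>\<alpha>$i0\<bar>"
proof -
  define b where "b = \<bar>\<alpha>$i0\<bar>"
  define y where "y = (1 - partial_freq \<alpha> i0 g) / b"
  have b: "b > 0" using assms by (simp add: b_def)
  have ac: "\<alpha>$i0 * of_int (balancing_coord \<alpha> i0 g) = b * of_int \<lceil>y\<rceil>"
    using assms by (cases "\<alpha>$i0 > 0") (auto simp: balancing_coord_def b_def y_def)
  have "y \<le> of_int \<lceil>y\<rceil>" "of_int \<lceil>y\<rceil> \<le> y + 1"
    by (rule le_of_int_ceiling) (rule of_int_ceiling_le_add_one)
  then have "b * y \<le> b * of_int \<lceil>y\<rceil>" "b * of_int \<lceil>y\<rceil> \<le> b * (y + 1)"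
    using b by (auto intro: mult_left_mono)
  moreover have "b * y = 1 - partial_freq \<alpha> i0 g" using b by (simp add: y_def)
  ultimately show ?thesis unfolding freq_band_lift ac b_def[symmetric] by (simp add: algebra_simps)
qed

lemma freq_dyadic_block_range:
  assumes "\<alpha>$i0 \<noteq> 0" "k \<in> dyadic_block \<alpha> i0 m"
  shows "1 \<le> freq \<alpha> k \<and> freq \<alpha> k \<le> 1 + \<bar>\<alpha>$i0\<bar>"
  using assms(2) freq_band_lift_range[OF assms(1)] by (auto simp: dyadic_block_def)

lemma dyadic_box_mem: "g \<in> dyadic_box i0 m \<Longrightarrow> j \<noteq> i0 \<Longrightarrow> 2^m \<le> g j \<and> g j < 2^(m+1)"
  by (auto simp: dyadic_box_def PiE_iff)

lemma dyadic_box_coord_bound: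
  assumes "g \<in> dyadic_box i0 m" "j \<noteq> i0"
  shows "\<bar>real_of_int (g j)\<bar> \<le> 2 * 2^m"
proof -
  from dyadic_box_mem[OF assms] have h: "2^m \<le> g j" "g j < 2 * 2^m" by auto
  have "(0::int) \<le> 2^m" by simp
  then have "0 \<le> real_of_int (g j)" using h(1) by linarith
  moreover have "real_of_int (g j) \<le> 2 * 2^m"
    using h(2) by (metis of_int_le_iff of_int_numeral of_int_power of_int_mult less_imp_le)
  ultimately show ?thesis by simp
qed

lemma dyadic_block_mem: "k \<in> dyadic_block \<alpha> i0 m \<Longrightarrow> j \<noteq> i0 \<Longrightarrow> 2^m \<le> k$j \<and> k$j < 2^(m+1)"
  by (auto simp: dyadic_block_def band_lift_def dest: dyadic_box_mem)

lemma finite_dyadic_block: "finite (dyadic_block \<alpha> i0 m)"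
  by (auto simp: dyadic_block_def dyadic_box_def intro!: finite_PiE)

lemma inj_band_lift: "inj_on (band_lift \<alpha> i0) (dyadic_box i0 m)"
proof
  fix g g' assume g: "g \<in> dyadic_box i0 m" and g': "g' \<in> dyadic_box i0 m"
    and eq: "band_lift \<alpha> i0 g = band_lift \<alpha> i0 g'"
  show "g = g'"
  proof (rule PiE_ext)
    show "g \<in> (\<Pi>\<^sub>E i\<in>UNIV - {i0}. {2^m ..< 2^(m+1)})" "g' \<in> (\<Pi>\<^sub>E i\<in>UNIV - {i0}. {2^m ..< 2^(m+1)})"
      using g g' by (simp_all add: dyadic_box_def)
    fix i assume "i \<in> UNIV - {i0}"
    then show "g i = g' i" using arg_cong[OF eq, of "\<lambda>k. k $ i"] by (simp add: band_lift_def)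
  qed
qed

lemma card_dyadic_block: "card (dyadic_block (\<alpha>::real^'n) i0 m) = 2^(m * (CARD('n) - 1))"
proof -
  have "card (dyadic_block \<alpha> i0 m) = card (dyadic_box i0 m)"
    unfolding dyadic_block_def by (rule card_image[OF inj_band_lift])
  also have "\<dots> = (\<Prod>i\<in>UNIV - {i0}. card {(2::int)^m ..< 2^(m+1)})"
    unfolding dyadic_box_def by (rule card_PiE) simp
  also have "\<dots> = (2^m) ^ (CARD('n) - 1)"
    by (simp add: card_Diff_singleton nat_power_eq)
  finally show ?thesis by (simp add: power_mult)
qed

text \<open>Blocks of different levels are disjoint and avoid \<open>0\<close>, as soon as there is a
  second coordinate \<open>j1 \<noteq> i0\<close> (this is where \<open>N \<ge> 2\<close> is used).\<close>

lemma dyadic_block_disjoint: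
  assumes "j1 \<noteq> (i0::'n::finite)" "m \<noteq> m'"
  shows "dyadic_block \<alpha> i0 m \<inter> dyadic_block \<alpha> i0 m' = {}"
proof (rule ccontr)
  assume "dyadic_block \<alpha> i0 m \<inter> dyadic_block \<alpha> i0 m' \<noteq> {}"
  then obtain k where "k \<in> dyadic_block \<alpha> i0 m" "k \<in> dyadic_block \<alpha> i0 m'" by blast
  from dyadic_block_mem[OF this(1) assms(1)] dyadic_block_mem[OF this(2) assms(1)]
  have "(2::int)^m < 2^(m'+1)" "(2::int)^m' < 2^(m+1)" by linarith+
  then have "m < m' + 1" "m' < m + 1" by (auto intro: power_less_imp_less_exp[of "2::int"])
  then show False using assms(2) by linarith
qed

lemma dyadic_block_nonzero: "j1 \<noteq> i0 \<Longrightarrow> k \<in> dyadic_block \<alpha> i0 m \<Longrightarrow> k \<noteq> 0"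
  using dyadic_block_mem[of k \<alpha> i0 m j1] by (auto simp: order.trans[OF one_le_power])

lemma jbr_le: "jbr x \<le> 1 + \<bar>x\<bar>"
  unfolding jbr_def by (rule real_le_lsqrt) (auto simp: power2_eq_square algebra_simps)

lemma jbr_ge: "jbr x \<ge> 1"
  unfolding jbr_def by (rule real_le_rsqrt) simp

definition l1_norm :: "real^'n \<Rightarrow> real" where
  "l1_norm \<alpha> = (\<Sum>j\<in>UNIV. \<bar>\<alpha>$j\<bar>)"

lemma partial_freq_bound:
  assumes "g \<in> dyadic_box i0 m"
  shows "\<bar>partial_freq \<alpha> i0 g\<bar> \<le> l1_norm \<alpha> * (2 * 2^m)"
proof -
  have "\<bar>partial_freq \<alpha> i0 g\<bar> \<le> (\<Sum>j\<in>UNIV-{i0}. \<bar>\<alpha>$j * of_int (g j)\<bar>)"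
    unfolding partial_freq_def by (rule sum_abs)
  also have "\<dots> \<le> (\<Sum>j\<in>UNIV-{i0}. \<bar>\<alpha>$j\<bar> * (2 * 2^m))"
    by (rule sum_mono) (auto simp: abs_mult intro!: mult_left_mono dyadic_box_coord_bound[OF assms])
  also have "\<dots> \<le> (\<Sum>j\<in>UNIV. \<bar>\<alpha>$j\<bar> * (2 * 2^m))"
    by (rule sum_mono2) auto
  finally show ?thesis by (simp add: l1_norm_def sum_distrib_right)
qed

lemma balancing_coord_bound:
  assumes "\<alpha>$i0 \<noteq> 0" "g \<in> dyadic_box i0 m"
  shows "\<bar>real_of_int (balancing_coord \<alpha> i0 g)\<bar> \<le> 1 + (1 + 2 * l1_norm \<alpha>) / \<bar>\<alpha>$i0\<bar> * 2^m"
proof -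
  define b where "b = \<bar>\<alpha>$i0\<bar>"
  define y where "y = (1 - partial_freq \<alpha> i0 g) / b"
  have b: "b > 0" using assms(1) by (simp add: b_def)
  have p1: "(1::real) \<le> 2^m" by simp
  have l0: "l1_norm \<alpha> \<ge> 0" unfolding l1_norm_def by (auto intro: sum_nonneg)
  have "\<bar>real_of_int (balancing_coord \<alpha> i0 g)\<bar> = \<bar>real_of_int \<lceil>y\<rceil>\<bar>"
    by (simp add: balancing_coord_def y_def b_def)
  also have "\<dots> \<le> \<bar>y\<bar> + 1"
    using le_of_int_ceiling[of y] of_int_ceiling_le_add_one[of y] by linarith
  also have "\<bar>y\<bar> \<le> (1 + \<bar>partial_freq \<alpha> i0 g\<bar>) / b"
    unfolding y_def using b by (auto simp: abs_divide intro!: divide_right_mono)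
  also have "1 + \<bar>partial_freq \<alpha> i0 g\<bar> \<le> 2^m + l1_norm \<alpha> * (2 * 2^m)"
    using partial_freq_bound[OF assms(2), of \<alpha>] p1 by linarith
  also have "\<dots> = (1 + 2 * l1_norm \<alpha>) * 2^m"
    by (simp add: algebra_simps)
  finally show ?thesis using b by (simp add: b_def divide_right_mono add.commute)
qed

definition block_const :: "real^'n \<Rightarrow> 'n \<Rightarrow> real" where
  "block_const \<alpha> i0 = 3 + (1 + 2 * l1_norm \<alpha>) / \<bar>\<alpha>$i0\<bar>"

lemma block_const_ge_3: "block_const \<alpha> i0 \<ge> 3"
  unfolding block_const_def l1_norm_def by (auto intro!: sum_nonneg)

lemma jbr_dyadic_block:
  assumes ai0: "\<alpha>$i0 \<noteq> 0" and k: "k \<in> dyadic_block \<alpha> i0 m"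
  shows "jbr (of_int (k$j)) \<le> block_const \<alpha> i0 * 2^m"
proof -
  define p :: real where "p = 2^m"
  have p1: "p \<ge> 1" by (simp add: p_def)
  obtain g where g: "g \<in> dyadic_box i0 m" and kg: "k = band_lift \<alpha> i0 g"
    using k by (auto simp: dyadic_block_def)
  have "1 + \<bar>of_int (k$j)\<bar> \<le> block_const \<alpha> i0 * p"
  proof (cases "j = i0")
    case False
    then have "\<bar>of_int (k$j)\<bar> \<le> 2 * p"
      using dyadic_box_coord_bound[OF g False] by (simp add: kg band_lift_def p_def)
    then have "1 + \<bar>of_int (k$j)\<bar> \<le> 3 * p" using p1 by linarith
    also have "\<dots> \<le> block_const \<alpha> i0 * p"
      using block_const_ge_3 p1 by (intro mult_right_mono) auto
    finally show ?thesis .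
  next
    case True
    define c where "c = (1 + 2 * l1_norm \<alpha>) / \<bar>\<alpha>$i0\<bar>"
    have "\<bar>of_int (k$j)\<bar> \<le> 1 + c * p"
      using True balancing_coord_bound[OF ai0 g] by (simp add: kg band_lift_def c_def p_def)
    then have "1 + \<bar>of_int (k$j)\<bar> \<le> 3 * p + c * p" using p1 by linarith
    then show ?thesis by (simp add: block_const_def c_def distrib_right)
  qed
  then show ?thesis using jbr_le[of "of_int (k$j)"] by (simp add: p_def)
qed

lemma powr_band_bound:
  fixes x c a :: real
  assumes "1 \<le> x" "x \<le> c"
  shows "\<bar>x\<bar> powr (2*a) \<le> c powr (2*\<bar>a\<bar>)"
proof -
  have "\<bar>x\<bar> powr (2*a) \<le> \<bar>x\<bar> powr (2*\<bar>a\<bar>)"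
    by (rule powr_mono) (use assms in auto)
  also have "\<dots> \<le> c powr (2*\<bar>a\<bar>)"
    by (rule powr_mono2) (use assms in auto)
  finally show ?thesis .
qed

text \<open>This is exactly where the
  hypothesis on \<open>\<sigma>\<close> enters.\<close>

lemma prod_jbr_powr_bound:
  fixes k :: "int^'n" and \<sigma> :: "real^'n"
  assumes q: "q \<ge> 1" "\<And>j. jbr (real_of_int (k$j)) \<le> q"
    and sig_nonneg: "\<And>j. \<sigma>$j \<ge> 0"
    and sig_sum: "(\<Sum>j\<in>UNIV. \<sigma>$j) \<le> (real CARD('n) - 1) / 2"
  shows "(\<Prod>j\<in>UNIV. jbr (real_of_int (k$j)) powr (2 * \<sigma>$j)) \<le> q ^ (CARD('n) - 1)"
proof -
  have "(\<Prod>j\<in>UNIV. jbr (real_of_int (k$j)) powr (2 * \<sigma>$j)) \<le> (\<Prod>j\<in>UNIV. q powr (2 * \<sigma>$j))"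
  proof (rule prod_mono)
    fix j
    have "1 \<le> jbr (real_of_int (k$j))" by (rule jbr_ge)
    then show "0 \<le> jbr (real_of_int (k$j)) powr (2 * \<sigma>$j) \<and>
               jbr (real_of_int (k$j)) powr (2 * \<sigma>$j) \<le> q powr (2 * \<sigma>$j)"
      using q(2)[of j] sig_nonneg[of j] by (auto intro: powr_mono2)
  qed
  also have "\<dots> = q powr (\<Sum>j\<in>UNIV. 2 * \<sigma>$j)"
    using q by (simp add: powr_sum)
  also have "\<dots> \<le> q powr real (CARD('n) - 1)"
  proof (rule powr_mono[OF _ q(1)])
    have "CARD('n) \<ge> 1" by (simp add: Suc_leI)
    then show "(\<Sum>j\<in>UNIV. 2 * \<sigma>$j) \<le> real (CARD('n) - 1)"
      using sig_sum by (simp add: sum_distrib_left[symmetric] of_nat_diff)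
  qed
  also have "\<dots> = q ^ (CARD('n) - 1)"
    by (rule powr_realpow) (use q in simp)
  finally show ?thesis .
qed

definition block_weight_const :: "real^'n \<Rightarrow> 'n \<Rightarrow> real \<Rightarrow> real" where
  "block_weight_const \<alpha> i0 a = (1 + \<bar>\<alpha>$i0\<bar>) powr (2*\<bar>a\<bar>) * block_const \<alpha> i0 ^ (CARD('n) - 1)"

lemma block_weight_const_pos: "block_weight_const \<alpha> i0 a > 0"
  unfolding block_weight_const_def using block_const_ge_3[of \<alpha> i0] by auto

text \<open>On the block of level \<open>m\<close> the weight is at most \<open>B 2\<^sup>m\<^sup>(\<^sup>N\<^sup>-\<^sup>1\<^sup>)\<close>, the reciprocal
  of the size of the block up to the constant \<open>B\<close>.\<close>

lemma G_weight_dyadic_block: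
  fixes \<alpha> \<sigma> :: "real^'n"
  assumes ai0: "\<alpha>$i0 \<noteq> 0" and sig_nonneg: "\<And>j. \<sigma>$j \<ge> 0"
    and sig_sum: "(\<Sum>j\<in>UNIV. \<sigma>$j) \<le> (real CARD('n) - 1) / 2"
    and k: "k \<in> dyadic_block \<alpha> i0 m"
  shows "G_weight \<alpha> \<sigma> a k \<le> block_weight_const \<alpha> i0 a * 2^(m*(CARD('n)-1))"
proof -
  define q where "q = block_const \<alpha> i0 * 2^m"
  have q1: "q \<ge> 1"
    using block_const_ge_3[of \<alpha> i0] by (simp add: q_def order.trans[OF _ mult_mono[of 1 _ 1]])
  have band: "1 \<le> freq \<alpha> k" "freq \<alpha> k \<le> 1 + \<bar>\<alpha>$i0\<bar>"
    using freq_dyadic_block_range[OF ai0 k] by auto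
  have "G_weight \<alpha> \<sigma> a k \<le> (1 + \<bar>\<alpha>$i0\<bar>) powr (2*\<bar>a\<bar>) * q ^ (CARD('n) - 1)"
    unfolding G_weight_def
    by (rule mult_mono[OF powr_band_bound[OF band]
          prod_jbr_powr_bound[OF q1 _ sig_nonneg sig_sum]])
       (auto simp: q_def intro!: jbr_dyadic_block[OF ai0 k] prod_nonneg)
  then show ?thesis
    by (simp add: block_weight_const_def q_def power_mult_distrib power_mult mult.assoc)
qed

section \<open>The duality construction\<close>

text \<open>Given positive weights \<open>w\<close> on a finite set \<open>U\<close> and \<open>W = \<Sum>\<^sub>k\<^sub>\<in>\<^sub>U 1 / w k\<close>, the
  coefficients \<open>1 / (\<surd>W w k)\<close> on \<open>U\<close> are the extremal ones for the Cauchy-Schwarz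
  inequality \<open>\<Sum> |f| \<le> (\<Sum> w |f|\<^sup>2)\<^sup>1\<^sup>/\<^sup>2 W\<^sup>1\<^sup>/\<^sup>2\<close>.\<close>

lemma sum_inverse_nonneg:
  assumes "\<And>k. k \<in> U \<Longrightarrow> w k > (0::real)"
  shows "(\<Sum>k\<in>U. 1 / w k) \<ge> 0"
  by (rule sum_nonneg) (use assms in \<open>fastforce simp: less_imp_le\<close>)

definition dual_coeffs :: "('a \<Rightarrow> real) \<Rightarrow> 'a set \<Rightarrow> 'a \<Rightarrow> real" where
  "dual_coeffs w U k = (if k \<in> U then 1 / (sqrt (\<Sum>j\<in>U. 1 / w j) * w k) else 0)"

lemma dual_coeffs_nonneg:
  assumes "\<And>k. k \<in> U \<Longrightarrow> w k > 0"
  shows "dual_coeffs w U k \<ge> 0"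
proof -
  have "(\<Sum>j\<in>U. 1 / w j) \<ge> 0" by (rule sum_inverse_nonneg[OF assms])
  then show ?thesis using assms[of k] by (auto simp: dual_coeffs_def)
qed

lemma dual_coeffs_energy:
  assumes "\<And>k. k \<in> U \<Longrightarrow> w k > 0"
  shows "(\<Sum>k\<in>U. w k * dual_coeffs w U k ^ 2) \<le> 1"
proof -
  define W where "W = (\<Sum>j\<in>U. 1 / w j)"
  have W0: "W \<ge> 0" unfolding W_def by (rule sum_inverse_nonneg[OF assms])
  have "(\<Sum>k\<in>U. w k * dual_coeffs w U k ^ 2) = (\<Sum>k\<in>U. 1 / W * (1 / w k))"
  proof (rule sum.cong[OF refl])
    fix k assume k: "k \<in> U"
    have "w k * (1 / (sqrt W * w k))^2 = 1 / (sqrt W ^ 2 * w k)"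
      using assms[OF k] by (simp add: power2_eq_square field_simps)
    then show "w k * dual_coeffs w U k ^ 2 = 1 / W * (1 / w k)"
      using k W0 by (simp add: dual_coeffs_def W_def[symmetric])
  qed
  also have "\<dots> = 1 / W * W" by (simp only: sum_distrib_left[symmetric] W_def)
  also have "\<dots> \<le> 1" by (cases "W = 0") auto
  finally show ?thesis .
qed

lemma dual_coeffs_pairing:
  assumes "\<And>k. k \<in> U \<Longrightarrow> w k > 0" and "c \<ge> 0" and "\<And>k. k \<in> U \<Longrightarrow> c \<le> v k"
  shows "c * sqrt (\<Sum>k\<in>U. 1 / w k) \<le> (\<Sum>k\<in>U. dual_coeffs w U k * v k)"
proof -
  define W where "W = (\<Sum>j\<in>U. 1 / w j)"
  have W0: "W \<ge> 0" unfolding W_def by (rule sum_inverse_nonneg[OF assms(1)])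
  have "c * sqrt W = c * (W / sqrt W)" by (simp only: real_div_sqrt[OF W0])
  also have "\<dots> = c / sqrt W * W" by simp
  also have "\<dots> = (\<Sum>k\<in>U. c / sqrt W * (1 / w k))" by (simp only: W_def sum_distrib_left)
  also have "\<dots> = (\<Sum>k\<in>U. dual_coeffs w U k * c)"
    by (rule sum.cong) (simp_all add: dual_coeffs_def W_def[symmetric])
  also have "\<dots> \<le> (\<Sum>k\<in>U. dual_coeffs w U k * v k)"
    by (rule sum_mono, rule mult_left_mono) (use assms dual_coeffs_nonneg[OF assms(1)] in auto)
  finally show ?thesis by (simp add: W_def)
qed

lemma G_weight_pos:
  assumes "freq \<alpha> k \<noteq> 0"
  shows "G_weight \<alpha> \<sigma> a k > 0"
proof -
  have "jbr x \<noteq> 0" for x using jbr_ge[of x] by linarith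
  then show ?thesis using assms by (auto simp: G_weight_def intro!: mult_pos_pos prod_pos)
qed

lemma G_norm_finite_support:
  assumes "finite U" "\<And>k. k \<notin> U \<Longrightarrow> fhat k = 0" "0 \<notin> U"
  shows "in_G \<alpha> \<sigma> a fhat"
    and "G_norm \<alpha> \<sigma> a fhat = sqrt (\<Sum>k\<in>U. G_weight \<alpha> \<sigma> a k * (cmod (fhat k))^2)"
proof -
  let ?g = "\<lambda>k. G_weight \<alpha> \<sigma> a k * (cmod (fhat k))^2"
  have "?g summable_on {k. k \<noteq> 0} \<longleftrightarrow> ?g summable_on U"
    by (rule summable_on_cong_neutral) (use assms in auto)
  then show "in_G \<alpha> \<sigma> a fhat" using assms(1) by (simp add: in_G_def)
  have "infsum ?g {k. k \<noteq> 0} = infsum ?g U"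
    by (rule infsum_cong_neutral) (use assms in auto)
  then show "G_norm \<alpha> \<sigma> a fhat = sqrt (\<Sum>k\<in>U. ?g k)" using assms(1) by (simp add: G_norm_def)
qed

lemma pairing_finite_support:
  assumes "finite U" "\<And>k. k \<notin> U \<Longrightarrow> fhat k = 0" "0 \<notin> U"
  shows "finite_support fhat"
    and "pairing \<alpha> fhat \<phi> = (\<Sum>k\<in>U. fhat k * complex_of_real (\<phi> (freq \<alpha> k)))"
proof -
  have supp: "{k. k \<noteq> 0 \<and> fhat k \<noteq> 0} \<subseteq> U" using assms(2) by blast
  then show "finite_support fhat" unfolding finite_support_def using assms(1) by (rule finite_subset)
  show "pairing \<alpha> fhat \<phi> = (\<Sum>k\<in>U. fhat k * complex_of_real (\<phi> (freq \<alpha> k)))"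
    unfolding pairing_def by (rule sum.mono_neutral_left[OF assms(1) supp]) (use assms(3) in auto)
qed

lemma unbounded_pairing_of_dual_coeffs:
  fixes U :: "nat \<Rightarrow> (int^'n) set"
  assumes fin: "\<And>M. finite (U M)" and nz: "\<And>M. 0 \<notin> U M"
    and band: "\<And>M k. k \<in> U M \<Longrightarrow> freq \<alpha> k \<noteq> 0 \<and> c \<le> \<phi> (freq \<alpha> k)" and c: "c > 0"
    and W_lim: "filterlim (\<lambda>M. \<Sum>k\<in>U M. 1 / G_weight \<alpha> \<sigma> a k) at_top sequentially"
  shows "\<exists>f. (\<forall>n. in_G \<alpha> \<sigma> a (f n) \<and> finite_support (f n)) \<and>
         (\<exists>C. \<forall>n. G_norm \<alpha> \<sigma> a (f n) \<le> C) \<and>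
         (\<forall>n. Im (pairing \<alpha> (f n) \<phi>) = 0) \<and>
         filterlim (\<lambda>n. Re (pairing \<alpha> (f n) \<phi>)) at_top sequentially"
proof -
  let ?w = "G_weight \<alpha> \<sigma> a"
  define f where "f M k = complex_of_real (dual_coeffs ?w (U M) k)" for M k
  have wpos: "\<And>k. k \<in> U M \<Longrightarrow> ?w k > 0" for M using band G_weight_pos by blast
  have dual_nonneg: "dual_coeffs ?w (U M) k \<ge> 0" for M k by (rule dual_coeffs_nonneg[OF wpos])
  have off: "\<And>k. k \<notin> U M \<Longrightarrow> f M k = 0" for M by (simp add: f_def dual_coeffs_def)
  have norm: "G_norm \<alpha> \<sigma> a (f M) \<le> 1" for M
    using G_norm_finite_support(2)[where U = "U M" and fhat = "f M", OF fin off nz]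
      dual_coeffs_energy[where U = "U M", OF wpos]
    by (simp add: f_def abs_of_nonneg[OF dual_nonneg])
  have pair: "pairing \<alpha> (f M) \<phi>
                = complex_of_real (\<Sum>k\<in>U M. dual_coeffs ?w (U M) k * \<phi> (freq \<alpha> k))" for M
    using pairing_finite_support(2)[where U = "U M" and fhat = "f M", OF fin off nz] by (simp add: f_def)
  have lower: "\<forall>M. c * sqrt (\<Sum>k\<in>U M. 1 / ?w k) \<le> Re (pairing \<alpha> (f M) \<phi>)"
    unfolding pair Re_complex_of_real by (intro allI dual_coeffs_pairing) (use wpos c band in auto)
  have "filterlim (\<lambda>M. c * sqrt (\<Sum>k\<in>U M. 1 / ?w k)) at_top sequentially"
    by (rule filterlim_tendsto_pos_mult_at_top[OF tendsto_const c
          filterlim_compose[OF sqrt_at_top W_lim]])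
  then have "filterlim (\<lambda>n. Re (pairing \<alpha> (f n) \<phi>)) at_top sequentially"
    by (rule filterlim_at_top_mono[OF _ always_eventually[OF lower]])
  moreover have "in_G \<alpha> \<sigma> a (f M) \<and> finite_support (f M)" for M
    using G_norm_finite_support(1)[where U = "U M" and fhat = "f M", OF fin off nz]
      pairing_finite_support(1)[where U = "U M" and fhat = "f M", OF fin off nz] by blast
  ultimately show ?thesis using norm by (intro exI[of _ f]) (auto simp: pair)
qed

section \<open>Unions of dyadic blocks carry unbounded inverse weight\<close>

definition block_union :: "real^'n \<Rightarrow> 'n \<Rightarrow> nat \<Rightarrow> (int^'n) set" where
  "block_union \<alpha> i0 M = (\<Union>m<M. dyadic_block \<alpha> i0 m)"

text \<open>Each block contributes at least \<open>1 / B\<close> to the sum of the inverse weights, since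
  it has \<open>2\<^sup>m\<^sup>(\<^sup>N\<^sup>-\<^sup>1\<^sup>)\<close> elements of weight at most \<open>B 2\<^sup>m\<^sup>(\<^sup>N\<^sup>-\<^sup>1\<^sup>)\<close>; the blocks are disjoint.\<close>

lemma inverse_weight_sum_block_union:
  fixes \<alpha> \<sigma> :: "real^'n"
  assumes ai0: "\<alpha>$i0 \<noteq> 0" and j1: "j1 \<noteq> i0" and sig_nonneg: "\<And>j. \<sigma>$j \<ge> 0"
    and sig_sum: "(\<Sum>j\<in>UNIV. \<sigma>$j) \<le> (real CARD('n) - 1) / 2"
  shows "real M / block_weight_const \<alpha> i0 a \<le> (\<Sum>k\<in>block_union \<alpha> i0 M. 1 / G_weight \<alpha> \<sigma> a k)"
proof -
  define B where "B = block_weight_const \<alpha> i0 a"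
  have B: "B > 0" by (simp add: B_def block_weight_const_pos)
  have block_sum: "1 / B \<le> (\<Sum>k\<in>dyadic_block \<alpha> i0 m. 1 / G_weight \<alpha> \<sigma> a k)" for m
  proof -
    have "real (card (dyadic_block \<alpha> i0 m)) * (1 / (B * 2^(m*(CARD('n)-1))))
            \<le> (\<Sum>k\<in>dyadic_block \<alpha> i0 m. 1 / G_weight \<alpha> \<sigma> a k)"
    proof (rule sum_bounded_below)
      fix k assume k: "k \<in> dyadic_block \<alpha> i0 m"
      have "G_weight \<alpha> \<sigma> a k \<le> B * 2^(m*(CARD('n)-1))"
        using G_weight_dyadic_block[OF ai0 sig_nonneg sig_sum k] by (simp add: B_def)
      moreover have "G_weight \<alpha> \<sigma> a k > 0"
        using freq_dyadic_block_range[OF ai0 k] by (intro G_weight_pos) auto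
      ultimately show "1 / (B * 2^(m*(CARD('n)-1))) \<le> 1 / G_weight \<alpha> \<sigma> a k"
        by (intro divide_left_mono) auto
    qed
    then show ?thesis using B by (simp add: card_dyadic_block)
  qed
  have "(\<Sum>k\<in>block_union \<alpha> i0 M. 1 / G_weight \<alpha> \<sigma> a k)
          = (\<Sum>m<M. \<Sum>k\<in>dyadic_block \<alpha> i0 m. 1 / G_weight \<alpha> \<sigma> a k)"
    unfolding block_union_def
    by (rule sum.UNION_disjoint) (auto simp: finite_dyadic_block dest: dyadic_block_disjoint[OF j1])
  also have "\<dots> \<ge> (\<Sum>m<M. 1 / B)" by (rule sum_mono[OF block_sum])
  finally show ?thesis by (simp add: B_def divide_inverse)
qed

lemma inverse_weight_sum_block_union_tendsto:
  fixes \<alpha> \<sigma> :: "real^'n"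
  assumes "\<alpha>$i0 \<noteq> 0" "j1 \<noteq> i0" "\<And>j. \<sigma>$j \<ge> 0"
    and "(\<Sum>j\<in>UNIV. \<sigma>$j) \<le> (real CARD('n) - 1) / 2"
  shows "filterlim (\<lambda>M. \<Sum>k\<in>block_union \<alpha> i0 M. 1 / G_weight \<alpha> \<sigma> a k) at_top sequentially"
proof -
  have "filterlim (\<lambda>M. real M / block_weight_const \<alpha> i0 a) at_top sequentially"
    using block_weight_const_pos[of \<alpha> i0 a] by real_asymp
  then show ?thesis
    by (rule filterlim_at_top_mono[OF _ always_eventually])
       (use inverse_weight_sum_block_union[OF assms] in simp)
qed

lemma block_union_finite: "finite (block_union \<alpha> i0 M)"
  by (simp add: block_union_def finite_dyadic_block)

lemma block_union_nonzero: "j1 \<noteq> i0 \<Longrightarrow> 0 \<notin> block_union \<alpha> i0 M"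
  using dyadic_block_nonzero by (fastforce simp: block_union_def)

lemma freq_block_union_range:
  assumes "\<alpha>$i0 \<noteq> 0" "k \<in> block_union \<alpha> i0 M"
  shows "1 \<le> freq \<alpha> k \<and> freq \<alpha> k \<le> 1 + \<bar>\<alpha>$i0\<bar>"
  using assms freq_dyadic_block_range by (auto simp: block_union_def)

lemma exists_two_coordinates:
  assumes "CARD('n) \<ge> 2"
  obtains i0 j1 :: "'n::finite" where "j1 \<noteq> i0"
proof -
  have "\<not> UNIV \<subseteq> {i0}" for i0 :: 'n
    using assms card_mono[of "{i0}" "UNIV :: 'n set"] by auto
  then show ?thesis using that by blast
qed

lemma freq_axis: "freq \<alpha> (axis i 1) = \<alpha>$i"
  by (simp add: freq_def axis_def if_distrib cong: if_cong)

text \<open>The dual coefficients on the union of the first \<open>n\<close> dyadic blocks, tested against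
  a bump that is \<open>\<ge> e\<^sup>-\<^sup>1\<close> on the band \<open>[1, 1 + |\<alpha>\<^sub>i\<^sub>0|]\<close>, give the required sequence.\<close>

theorem lemma5p2:
  fixes \<alpha> :: "real^'n" and \<sigma> :: "real^'n" and a :: real
  assumes nonres: "\<And>k::int^'n. k \<noteq> 0 \<Longrightarrow> freq \<alpha> k \<noteq> 0"
    and N2: "CARD('n) \<ge> 2"
    and sig_nonneg: "\<And>j. \<sigma>$j \<ge> 0"
    and sig_sum: "(\<Sum>j\<in>UNIV. \<sigma>$j) \<le> (real CARD('n) - 1) / 2"
  shows "\<exists>(f :: nat \<Rightarrow> int^'n \<Rightarrow> complex) (\<phi> :: real \<Rightarrow> real).
           (\<forall>n. in_G \<alpha> \<sigma> a (f n) \<and> finite_support (f n)) \<and>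
           Cc_infty \<phi> \<and>
           (\<exists>C. \<forall>n. G_norm \<alpha> \<sigma> a (f n) \<le> C) \<and>
           (\<forall>n. Im (pairing \<alpha> (f n) \<phi>) = 0) \<and>
           filterlim (\<lambda>n. Re (pairing \<alpha> (f n) \<phi>)) at_top sequentially"
proof -
  obtain i0 j1 :: 'n where j1: "j1 \<noteq> i0" using exists_two_coordinates[OF N2] .
  have ai0: "\<alpha>$i0 \<noteq> 0" using nonres[of "axis i0 1"] by (simp add: freq_axis)
  define L where "L = 2 + \<bar>\<alpha>$i0\<bar>"
  have band: "\<And>M k. k \<in> block_union \<alpha> i0 M \<Longrightarrow>
                 freq \<alpha> k \<noteq> 0 \<and> exp (-1) \<le> bump L 1 0 (freq \<alpha> k)"
    using freq_block_union_range[OF ai0] by (force simp: L_def bump_lower_bound)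
  have "\<exists>f. (\<forall>n. in_G \<alpha> \<sigma> a (f n) \<and> finite_support (f n)) \<and>
           (\<exists>C. \<forall>n. G_norm \<alpha> \<sigma> a (f n) \<le> C) \<and>
           (\<forall>n. Im (pairing \<alpha> (f n) (bump L 1 0)) = 0) \<and>
           filterlim (\<lambda>n. Re (pairing \<alpha> (f n) (bump L 1 0))) at_top sequentially"
    by (rule unbounded_pairing_of_dual_coeffs[OF block_union_finite block_union_nonzero[OF j1] _
          exp_gt_zero inverse_weight_sum_block_union_tendsto[OF ai0 j1 sig_nonneg sig_sum]])
       (fact band)
  moreover have "Cc_infty (bump L 1 0)" by (rule bump_Cc_infty) (simp add: L_def)
  ultimately show ?thesis by blast
qed

end
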